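(* Let $\mathcal{H}=\mathbb{C}^3$, written in block form $\mathbb{C}\oplus\mathbb{C}^2$. Let $Q=\{\pm I,\pm i\sigma_1,\pm i\sigma_2,\pm i\sigma_3\}\subset M_2(\mathbb{C})$ be the quaternion group and define the unitary representation $U(g)=\begin{pmatrix}1&0\\0&g\end{pmatrix}$, $g\in Q$, on $\mathbb{C}^3$. Fix $\lambda>0$ and let $T=\begin{pmatrix}2\lambda&0\\0&-\lambda I_{2}\end{pmatrix}$. Let $$M=\tfrac18 I+\alpha_1\begin{pmatrix}0&0\\0&\sigma_1\end{pmatrix}+\alpha_2\begin{pmatrix}0&0\\0&\sigma_2\end{pmatrix}+\alpha_3\begin{pmatrix}0&0\\0&\sigma_3\end{pmatrix}+\begin{pmatrix}0&\bar v^t\\ v&0\end{pmatrix},$$ where $\alpha_1,\alpha_2,\alpha_3\in\mathbb{R}$ and $v\in\mathbb{C}^2$ (a column vector, $\bar v^t$ its conjugate transpose) satisfy $\alpha_1\neq0$, $\alpha_2\neq0$, $\alpha_3\neq0$, $v\neq0$, and $M\geq 0$. Then the map $\mathsf{M}(g)=U(g)MU(g)^*$, $g\in Q$, is a $U$-covariant observable on $Q$, and the linear span of $\{\mathsf{M}(g):g\in Q\}$ equals the Hilbert–Schmidt orthogonal complement $T^\perp=\{L\in M_3(\mathbb{C}):\mathrm{tr}(TL)=0\}$. Hence $\mathsf{M}$ is a pure-state informationally complete observable with $8$ outcomes, the minimal number of outcomes of a pure-state informationally complete observable on $\mathbb{C}^3$.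
   Context: $\sigma_1,\sigma_2,\sigma_3$ are the Pauli matrices and $I$ the identity matrix. An observable with finite outcome set $\Omega$ is a map $\mathsf{M}$ from $\Omega$ to positive operators on $\mathcal{H}$ with $\sum_{x\in\Omega}\mathsf{M}(x)=I$. It is pure-state informationally complete (PIC) if for any two different pure states (rank-one projections) $\varrho_1\neq\varrho_2$ there is $x\in\Omega$ with $\mathrm{tr}(\varrho_1\mathsf{M}(x))\neq\mathrm{tr}(\varrho_2\mathsf{M}(x))$. An observable $\mathsf{M}$ on $\Omega=Q$ is $U$-covariant if $U(g)\mathsf{M}(x)U(g)^*=\mathsf{M}(gx)$ for all $g,x\in Q$. The space of $3\times3$ matrices carries the Hilbert–Schmidt inner product $\langle L_1,L_2\rangle=\mathrm{tr}(L_1^*L_2)$. *)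

theory Defs
  imports "Jordan_Normal_Form.Matrix"
begin

definition mtrace :: "complex mat \<Rightarrow> complex" where
  "mtrace A = (\<Sum>i<dim_row A. A $$ (i,i))"

definition adj :: "complex mat \<Rightarrow> complex mat" where
  "adj A = mat (dim_col A) (dim_row A) (\<lambda>(i,j). cnj (A $$ (j,i)))"

definition positive_op :: "nat \<Rightarrow> complex mat \<Rightarrow> bool" where
  "positive_op n A \<longleftrightarrow> A \<in> carrier_mat n n \<and>
     (\<forall>x \<in> carrier_vec n.
        let z = (\<Sum>i<n. cnj (x $ i) * (A *\<^sub>v x) $ i) in Im z = 0 \<and> 0 \<le> Re z)"

definition observable :: "nat \<Rightarrow> 'a set \<Rightarrow> ('a \<Rightarrow> complex mat) \<Rightarrow> bool" where
  "observable n \<Omega> Mo \<longleftrightarrow> finite \<Omega> \<and> (\<forall>x\<in>\<Omega>. positive_op n (Mo x)) \<and>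
     mat n n (\<lambda>(i,j). \<Sum>x\<in>\<Omega>. Mo x $$ (i,j)) = 1\<^sub>m n"

definition pure_state :: "nat \<Rightarrow> complex mat \<Rightarrow> bool" where
  "pure_state n \<rho> \<longleftrightarrow> (\<exists>v \<in> carrier_vec n. (\<Sum>i<n. (cmod (v $ i))\<^sup>2) = 1 \<and>
      \<rho> = mat n n (\<lambda>(i,j). v $ i * cnj (v $ j)))"

definition PIC :: "nat \<Rightarrow> 'a set \<Rightarrow> ('a \<Rightarrow> complex mat) \<Rightarrow> bool" where
  "PIC n \<Omega> Mo \<longleftrightarrow> (\<forall>\<rho>1 \<rho>2. pure_state n \<rho>1 \<and> pure_state n \<rho>2 \<and> \<rho>1 \<noteq> \<rho>2 \<longrightarrow>
      (\<exists>x\<in>\<Omega>. mtrace (\<rho>1 * Mo x) \<noteq> mtrace (\<rho>2 * Mo x)))"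

definition sigma1 :: "complex mat" where "sigma1 = mat_of_rows_list 2 [[0,1],[1,0]]"
definition sigma2 :: "complex mat" where "sigma2 = mat_of_rows_list 2 [[0,-\<i>],[\<i>,0]]"
definition sigma3 :: "complex mat" where "sigma3 = mat_of_rows_list 2 [[1,0],[0,-1]]"

definition quaternion_group :: "complex mat set" where
  "quaternion_group = {s \<cdot>\<^sub>m g | s g. s \<in> {1, -1} \<and>
      g \<in> {1\<^sub>m 2, \<i> \<cdot>\<^sub>m sigma1, \<i> \<cdot>\<^sub>m sigma2, \<i> \<cdot>\<^sub>m sigma3}}"

(* block embedding of a 2x2 matrix into C (+) C^2: diag(0, A) *)
definition blk0 :: "complex mat \<Rightarrow> complex mat" where
  "blk0 A = mat 3 3 (\<lambda>(i,j). if i = 0 \<or> j = 0 then 0 else A $$ (i - 1, j - 1))"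

definition Urep :: "complex mat \<Rightarrow> complex mat" where
  "Urep g = mat 3 3 (\<lambda>(i,j). if i = 0 \<and> j = 0 then 1
                             else if i = 0 \<or> j = 0 then 0 else g $$ (i - 1, j - 1))"

definition offdiag :: "complex vec \<Rightarrow> complex mat" where
  "offdiag v = mat 3 3 (\<lambda>(i,j). if i = 0 \<and> j \<noteq> 0 then cnj (v $ (j - 1))
                               else if j = 0 \<and> i \<noteq> 0 then v $ (i - 1) else 0)"

definition Tmat :: "real \<Rightarrow> complex mat" where
  "Tmat lam = mat 3 3 (\<lambda>(i,j). if i \<noteq> j then 0 else if i = 0 then complex_of_real (2 * lam)
                               else complex_of_real (- lam))"

definition Mseed :: "real \<Rightarrow> real \<Rightarrow> real \<Rightarrow> complex vec \<Rightarrow> complex mat" where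
  "Mseed a1 a2 a3 v = (1/8) \<cdot>\<^sub>m 1\<^sub>m 3 + complex_of_real a1 \<cdot>\<^sub>m blk0 sigma1
      + complex_of_real a2 \<cdot>\<^sub>m blk0 sigma2 + complex_of_real a3 \<cdot>\<^sub>m blk0 sigma3 + offdiag v"

end

theory Submission
  imports Defs "HOL-Analysis.Linear_Algebra"
begin

text \<open>
  Grouping each \<open>g \<in> Q\<close> with \<open>-g\<close>, the sums \<open>M(g) + M(-g)\<close> span the block-diagonal part of
  \<open>T\<^sup>\<bottom>\<close> (a Hadamard system, solvable because \<open>\<alpha>\<^sub>1 \<alpha>\<^sub>2 \<alpha>\<^sub>3 \<noteq> 0\<close>) and the differences
  \<open>M(g) - M(-g)\<close> span its off-diagonal block (a \<open>2 \<times> 2\<close> system with determinant \<open>-|v|\<^sup>2\<close>), so the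
  span of the eight effects is exactly \<open>T\<^sup>\<bottom>\<close>. A pure state on \<open>\<complex>\<^sup>3\<close> is determined by its
  traces against \<open>T\<^sup>\<bottom>\<close>, which gives pure-state informational completeness.

  For the lower bound, the real-linear functionals \<open>X \<mapsto> tr(X E)\<close> of at most seven effects \<open>E\<close>
  vanish on a subspace of dimension \<open>\<ge> 2\<close> of the nine-dimensional space of Hermitian matrices. On the
  circle through two orthogonal elements of that subspace the determinant is odd, hence vanishes
  somewhere. The resulting \<open>X \<noteq> 0\<close> is traceless (the effects sum to \<open>I\<close>) and singular, so
  \<open>X\<^sup>3 = s X\<close> with \<open>s = tr(X\<^sup>2)/2 > 0\<close>, and \<open>(X\<^sup>2 \<pm> \<surd>s X)/2s\<close> are two distinct rank-one
  projections differing by a multiple of \<open>X\<close>: two pure states that no effect distinguishes.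
\<close>

lemma carrier_adj [simp]: "A \<in> carrier_mat n m \<Longrightarrow> adj A \<in> carrier_mat m n"
  by (auto simp: adj_def)

lemma dim_adj [simp]: "dim_row (adj A) = dim_col A" "dim_col (adj A) = dim_row A"
  by (simp_all add: adj_def)

lemma carrier_adj_mult_vec [simp]: "A \<in> carrier_mat n n \<Longrightarrow> v \<in> carrier_vec n \<Longrightarrow> adj A *\<^sub>v v \<in> carrier_vec n"
  unfolding carrier_vec_def carrier_mat_def adj_def by simp

lemma adj_index: "i < dim_col A \<Longrightarrow> j < dim_row A \<Longrightarrow> adj A $$ (i,j) = cnj (A $$ (j,i))"
  by (simp add: adj_def)

lemma adj_mult:
  assumes "A \<in> carrier_mat n k" "B \<in> carrier_mat k m"
  shows "adj (A * B) = adj B * adj A"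
  using assms by (auto simp: adj_def scalar_prod_def cnj_sum intro!: eq_matI sum.cong)

lemma adj_add: "A \<in> carrier_mat n m \<Longrightarrow> B \<in> carrier_mat n m \<Longrightarrow> adj (A + B) = adj A + adj B"
  by (auto simp: adj_def intro!: eq_matI)

lemma adj_smult: "adj (c \<cdot>\<^sub>m A) = cnj c \<cdot>\<^sub>m adj A"
  by (auto simp: adj_def intro!: eq_matI)

lemma mtrace_mult:
  assumes "A \<in> carrier_mat n m" "B \<in> carrier_mat m n"
  shows "mtrace (A * B) = (\<Sum>i<n. \<Sum>k<m. A $$ (i,k) * B $$ (k,i))"
  using assms by (simp add: mtrace_def scalar_prod_def lessThan_atLeast0)

lemma mtrace_add: "A \<in> carrier_mat n n \<Longrightarrow> B \<in> carrier_mat n n \<Longrightarrow> mtrace (A + B) = mtrace A + mtrace B"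
  by (simp add: mtrace_def sum.distrib)

lemma mtrace_smult: "A \<in> carrier_mat n n \<Longrightarrow> mtrace (c \<cdot>\<^sub>m A) = c * mtrace A"
  by (simp add: mtrace_def sum_distrib_left)

lemma mtrace_add_mult:
  assumes "A \<in> carrier_mat n n" "B \<in> carrier_mat n n" "C \<in> carrier_mat n n"
  shows "mtrace ((A + B) * C) = mtrace (A * C) + mtrace (B * C)"
  using assms by (simp add: add_mult_distrib_mat[of A n n B C n] mtrace_def sum.distrib)

lemma mtrace_smult_mult:
  assumes "A \<in> carrier_mat n n" "C \<in> carrier_mat n n"
  shows "mtrace ((r \<cdot>\<^sub>m A) * C) = r * mtrace (A * C)"
  using assms by (simp add: mult_smult_assoc_mat[of A n n C n] mtrace_def sum_distrib_left)

lemma mtrace_mult_lincomb: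
  assumes "A \<in> carrier_mat n n" and "\<And>g. g \<in> S \<Longrightarrow> B g \<in> carrier_mat n n"
  shows "mtrace (A * mat n n (\<lambda>(i,j). \<Sum>g\<in>S. c g * B g $$ (i,j))) = (\<Sum>g\<in>S. c g * mtrace (A * B g))"
proof -
  have "mtrace (A * mat n n (\<lambda>(i,j). \<Sum>g\<in>S. c g * B g $$ (i,j)))
      = (\<Sum>i<n. \<Sum>k<n. \<Sum>g\<in>S. c g * (A $$ (i,k) * B g $$ (k,i)))"
    using assms(1) by (simp add: mtrace_mult sum_distrib_left mult.left_commute)
  also have "\<dots> = (\<Sum>g\<in>S. c g * (\<Sum>i<n. \<Sum>k<n. A $$ (i,k) * B g $$ (k,i)))"
    by (simp add: sum.swap[of _ S] sum_distrib_left)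
  also have "\<dots> = (\<Sum>g\<in>S. c g * mtrace (A * B g))"
    using assms by (simp add: mtrace_mult)
  finally show ?thesis .
qed

lemma sum_mtrace_observable:
  assumes "observable n \<Omega> Mo" "X \<in> carrier_mat n n"
  shows "(\<Sum>w\<in>\<Omega>. mtrace (X * Mo w)) = mtrace X"
proof -
  have "\<And>w. w \<in> \<Omega> \<Longrightarrow> Mo w \<in> carrier_mat n n"
    using assms(1) by (simp add: observable_def positive_op_def)
  then have "mtrace (X * mat n n (\<lambda>(i,j). \<Sum>w\<in>\<Omega>. 1 * Mo w $$ (i,j))) = (\<Sum>w\<in>\<Omega>. 1 * mtrace (X * Mo w))"
    by (rule mtrace_mult_lincomb[OF assms(2)])
  then show ?thesis using assms by (simp add: observable_def)
qed

definition matrix_unit :: "nat \<Rightarrow> nat \<Rightarrow> nat \<Rightarrow> complex mat" where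
  "matrix_unit n i j = mat n n (\<lambda>(a,b). if a = i \<and> b = j then 1 else 0)"

lemma matrix_unit_carrier [simp]: "matrix_unit n i j \<in> carrier_mat n n"
  by (simp add: matrix_unit_def)

lemma mtrace_mult_matrix_unit:
  assumes "A \<in> carrier_mat n n" "i < n" "j < n"
  shows "mtrace (A * matrix_unit n i j) = A $$ (j,i)"
proof -
  have "(\<Sum>k<n. A $$ (a,k) * matrix_unit n i j $$ (k,a)) = (\<Sum>k<n. if k = i \<and> a = j then A $$ (a,k) else 0)"
    if "a < n" for a
    using that by (intro sum.cong) (auto simp: matrix_unit_def)
  also have "\<dots> a = (if a = j then A $$ (a,i) else 0)" for a
    using assms by (cases "a = j") simp_all
  finally have "(\<Sum>k<n. A $$ (a,k) * matrix_unit n i j $$ (k,a)) = (if a = j then A $$ (a,i) else 0)"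
    if "a < n" for a using that by blast
  then have "mtrace (A * matrix_unit n i j) = (\<Sum>a<n. if a = j then A $$ (a,i) else 0)"
    using assms by (simp add: mtrace_mult)
  then show ?thesis using assms by simp
qed

lemma nonzero_mat_entry:
  assumes "A \<in> carrier_mat n m" "A \<noteq> 0\<^sub>m n m"
  obtains i j where "i < n" "j < m" "A $$ (i,j) \<noteq> 0"
  using assms by (metis eq_matI carrier_matD index_zero_mat(1,2,3))

definition hermitian :: "nat \<Rightarrow> complex mat \<Rightarrow> bool" where
  "hermitian n A \<longleftrightarrow> A \<in> carrier_mat n n \<and> adj A = A"

lemma hermitian_iff:
  "hermitian n A \<longleftrightarrow> A \<in> carrier_mat n n \<and> (\<forall>i<n. \<forall>j<n. A $$ (j,i) = cnj (A $$ (i,j)))"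
proof (cases "A \<in> carrier_mat n n")
  case A: True
  have "adj A = A \<longleftrightarrow> (\<forall>i<n. \<forall>j<n. A $$ (j,i) = cnj (A $$ (i,j)))"
  proof
    assume h: "adj A = A"
    show "\<forall>i<n. \<forall>j<n. A $$ (j,i) = cnj (A $$ (i,j))"
    proof (intro allI impI)
      fix i j assume "i < n" "j < n"
      then have "adj A $$ (j,i) = cnj (A $$ (i,j))" using A by (simp add: adj_index)
      then show "A $$ (j,i) = cnj (A $$ (i,j))" by (simp only: h)
    qed
  next
    assume h: "\<forall>i<n. \<forall>j<n. A $$ (j,i) = cnj (A $$ (i,j))"
    show "adj A = A"
    proof (rule eq_matI)
      fix i j assume "i < dim_row A" "j < dim_col A"
      then have "i < n" "j < n" using A by auto
      then have "A $$ (i,j) = cnj (A $$ (j,i))" using h by blast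
      then show "adj A $$ (i,j) = A $$ (i,j)" using A \<open>i < dim_row A\<close> \<open>j < dim_col A\<close>
        by (simp add: adj_index)
    qed (use A in auto)
  qed
  then show ?thesis using A by (simp add: hermitian_def)
qed (simp add: hermitian_def)

lemma hermitian_cnj: "hermitian n A \<Longrightarrow> i < n \<Longrightarrow> j < n \<Longrightarrow> cnj (A $$ (i,j)) = A $$ (j,i)"
  unfolding hermitian_iff by (metis complex_cnj_cnj)

lemma hermitian_add: "hermitian n A \<Longrightarrow> hermitian n B \<Longrightarrow> hermitian n (A + B)"
  by (simp add: hermitian_def adj_add[of A n n])

lemma hermitian_smult_real: "hermitian n A \<Longrightarrow> c \<in> \<real> \<Longrightarrow> hermitian n (c \<cdot>\<^sub>m A)"
  by (simp add: hermitian_def adj_smult Reals_cnj_iff)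

lemma hermitian_mult_self: "hermitian n A \<Longrightarrow> hermitian n (A * A)"
  by (auto simp: hermitian_def adj_mult[of A n n A n])

lemma mtrace_mult_hermitian_real:
  assumes "hermitian n A" "hermitian n B"
  shows "mtrace (A * B) \<in> \<real>"
proof -
  have A: "A \<in> carrier_mat n n" and B: "B \<in> carrier_mat n n"
    using assms by (simp_all add: hermitian_def)
  have "cnj (mtrace (A * B)) = (\<Sum>i<n. \<Sum>k<n. A $$ (k,i) * B $$ (i,k))"
    using A B by (auto simp: mtrace_mult cnj_sum hermitian_cnj[OF assms(1)] hermitian_cnj[OF assms(2)]
        intro!: sum.cong)
  also have "\<dots> = (\<Sum>k<n. \<Sum>i<n. A $$ (k,i) * B $$ (i,k))"
    by (rule sum.swap)
  also have "\<dots> = mtrace (A * B)"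
    using A B by (simp add: mtrace_mult)
  finally show ?thesis by (metis Reals_cnj_iff)
qed

lemma mtrace_mult_self_hermitian:
  assumes "hermitian n A"
  shows "mtrace (A * A) = of_real (\<Sum>i<n. \<Sum>k<n. (cmod (A $$ (i,k)))\<^sup>2)"
proof -
  have A: "A \<in> carrier_mat n n" using assms by (simp add: hermitian_def)
  have "mtrace (A * A) = (\<Sum>i<n. \<Sum>k<n. A $$ (i,k) * cnj (A $$ (i,k)))"
    using A by (auto simp: mtrace_mult hermitian_cnj[OF assms] intro!: sum.cong)
  then show ?thesis by (simp only: of_real_sum complex_norm_square)
qed

lemma mtrace_mult_self_hermitian_pos:
  assumes "hermitian n A" "A \<noteq> 0\<^sub>m n n"
  shows "Re (mtrace (A * A)) > 0"
proof -
  have A: "A \<in> carrier_mat n n" using assms by (simp add: hermitian_def)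
  obtain i k where ik: "i < n" "k < n" "A $$ (i,k) \<noteq> 0"
    using nonzero_mat_entry[OF A assms(2)] by blast
  have "0 < (\<Sum>k<n. (cmod (A $$ (i,k)))\<^sup>2)"
    using ik by (intro sum_pos2[of _ k]) auto
  also have "\<dots> \<le> (\<Sum>i<n. \<Sum>k<n. (cmod (A $$ (i,k)))\<^sup>2)"
    using ik by (intro member_le_sum sum_nonneg) auto
  finally show ?thesis by (simp add: mtrace_mult_self_hermitian[OF assms(1)])
qed

lemma positive_op_quadratic_form:
  assumes "positive_op n M"
  shows "Im (\<Sum>i<n. cnj (f i) * (\<Sum>k<n. M $$ (i,k) * f k)) = 0"
proof -
  have "M \<in> carrier_mat n n" using assms by (simp add: positive_op_def)
  then have "(\<Sum>i<n. cnj (vec n f $ i) * (M *\<^sub>v vec n f) $ i) = (\<Sum>i<n. cnj (f i) * (\<Sum>k<n. M $$ (i,k) * f k))"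
    by (intro sum.cong) (auto simp: scalar_prod_def lessThan_atLeast0)
  then show ?thesis using assms unfolding positive_op_def Let_def by (metis vec_carrier)
qed

lemma sum_two_points:
  assumes "finite S" "i \<in> S" "j \<in> S" "i \<noteq> j" "\<And>k. k \<in> S \<Longrightarrow> k \<noteq> i \<Longrightarrow> k \<noteq> j \<Longrightarrow> g k = 0"
  shows "sum g S = g i + g j"
proof -
  have "sum g S = sum g {i, j}"
    using assms by (intro sum.mono_neutral_right) auto
  then show ?thesis using assms(4) by simp
qed

lemma positive_op_hermitian:
  assumes "positive_op n M"
  shows "hermitian n M"
proof -
  have M: "M \<in> carrier_mat n n" using assms by (simp add: positive_op_def)
  have form: "Im (cnj a * (M $$ (i,i) * a + M $$ (i,j) * b) + cnj b * (M $$ (j,i) * a + M $$ (j,j) * b)) = 0"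
    if "i < n" "j < n" "i \<noteq> j" for i j a b
  proof -
    define f where "f k = (if k = i then a else if k = j then b else 0)" for k
    have fi: "f i = a" "f j = b" using that by (simp_all add: f_def)
    have "(\<Sum>k<n. M $$ (l,k) * f k) = M $$ (l,i) * f i + M $$ (l,j) * f j" for l
      using that by (intro sum_two_points) (auto simp: f_def)
    moreover have "(\<Sum>l<n. cnj (f l) * (M $$ (l,i) * f i + M $$ (l,j) * f j))
        = cnj (f i) * (M $$ (i,i) * f i + M $$ (i,j) * f j) + cnj (f j) * (M $$ (j,i) * f i + M $$ (j,j) * f j)"
      using that by (intro sum_two_points) (auto simp: f_def)
    ultimately have "(\<Sum>l<n. cnj (f l) * (\<Sum>k<n. M $$ (l,k) * f k))
        = cnj a * (M $$ (i,i) * a + M $$ (i,j) * b) + cnj b * (M $$ (j,i) * a + M $$ (j,j) * b)"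
      by (simp add: fi)
    then show ?thesis using positive_op_quadratic_form[OF assms, of f] by simp
  qed
  have diag: "Im (M $$ (i,i)) = 0" if "i < n" for i
  proof -
    define f where "f k = (if k = i then 1 else 0 :: complex)" for k
    have "(\<Sum>l<n. cnj (f l) * (\<Sum>k<n. M $$ (l,k) * f k)) = (\<Sum>l<n. if l = i then M $$ (l,i) else 0)"
      using that by (intro sum.cong) (simp_all add: f_def if_distrib[where f = "\<lambda>x. _ * x"] cong: if_cong)
    also have "\<dots> = M $$ (i,i)" using that by simp
    finally show ?thesis using positive_op_quadratic_form[OF assms, of f] by simp
  qed
  have "M $$ (j,i) = cnj (M $$ (i,j))" if "i < n" "j < n" "i \<noteq> j" for i j
    using form[OF that, of 1 1] form[OF that, of 1 "\<i>"] diag[OF that(1)] diag[OF that(2)]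
    by (simp add: complex_eq_iff algebra_simps)
  moreover have "M $$ (i,i) = cnj (M $$ (i,i))" if "i < n" for i
    using diag[OF that] by (simp add: complex_eq_iff)
  ultimately show ?thesis using M unfolding hermitian_iff by (metis nat_neq_iff)
qed

lemma quadratic_form_conj:
  fixes A B :: "complex mat"
  assumes A: "A \<in> carrier_mat n n" and B: "B \<in> carrier_mat n n" and x: "x \<in> carrier_vec n"
  shows "(\<Sum>i<n. cnj (x $ i) * ((A * B * adj A) *\<^sub>v x) $ i)
       = (\<Sum>i<n. cnj ((adj A *\<^sub>v x) $ i) * (B *\<^sub>v (adj A *\<^sub>v x)) $ i)"
proof -
  define y where "y = adj A *\<^sub>v x"
  define z where "z = B *\<^sub>v y"
  have yc: "y \<in> carrier_vec n" using A x by (simp add: y_def)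
  have zc: "z \<in> carrier_vec n" using B yc by (simp add: z_def)
  have eq: "(A * B * adj A) *\<^sub>v x = A *\<^sub>v z"
    using A B x by (simp add: z_def y_def assoc_mult_mat_vec[of _ n n _ n])
  have yl: "cnj (y $ l) = (\<Sum>i<n. A $$ (i,l) * cnj (x $ i))" if "l < n" for l
    using that A x by (simp add: y_def adj_def scalar_prod_def row_def cnj_sum lessThan_atLeast0 mult.commute)
  have "(\<Sum>i<n. cnj (x $ i) * (A *\<^sub>v z) $ i) = (\<Sum>i<n. \<Sum>l<n. cnj (x $ i) * A $$ (i,l) * z $ l)"
    using A zc by (simp add: scalar_prod_def row_def sum_distrib_left lessThan_atLeast0 mult.assoc)
  also have "\<dots> = (\<Sum>l<n. \<Sum>i<n. cnj (x $ i) * A $$ (i,l) * z $ l)" by (rule sum.swap)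
  also have "\<dots> = (\<Sum>l<n. cnj (y $ l) * z $ l)"
    by (rule sum.cong, simp, simp add: yl sum_distrib_right sum_distrib_left mult_ac)
  finally show ?thesis by (simp add: eq y_def z_def)
qed

lemma positive_op_conj:
  assumes B: "positive_op n B" and A: "A \<in> carrier_mat n n"
  shows "positive_op n (A * B * adj A)"
proof -
  have Bc: "B \<in> carrier_mat n n" using B by (simp add: positive_op_def)
  show ?thesis unfolding positive_op_def
  proof (intro conjI ballI)
    show "A * B * adj A \<in> carrier_mat n n" using A Bc by auto
    fix x :: "complex vec" assume x: "x \<in> carrier_vec n"
    have "adj A *\<^sub>v x \<in> carrier_vec n" using A x by simp
    then show "let z = \<Sum>i<n. cnj (x $ i) * (A * B * adj A *\<^sub>v x) $ i in Im z = 0 \<and> 0 \<le> Re z"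
      using B unfolding positive_op_def quadratic_form_conj[OF A Bc x] by auto
  qed
qed

section \<open>Pure states from rank-one projections\<close>

lemma idempotent_hermitian_diag:
  fixes P :: "nat \<Rightarrow> nat \<Rightarrow> complex"
  assumes herm: "\<And>i k. i < n \<Longrightarrow> k < n \<Longrightarrow> cnj (P i k) = P k i"
    and idem: "\<And>i l. i < n \<Longrightarrow> l < n \<Longrightarrow> (\<Sum>k<n. P i k * P k l) = P i l"
    and i: "i < n"
  shows "P i i = of_real (\<Sum>k<n. (cmod (P i k))\<^sup>2)"
proof -
  have "(\<Sum>k<n. P i k * cnj (P i k)) = (\<Sum>k<n. P i k * P k i)"
    using herm i by (intro sum.cong) auto
  then have "P i i = (\<Sum>k<n. P i k * cnj (P i k))"
    using idem[OF i i] by simp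
  also have "\<dots> = of_real (\<Sum>k<n. (cmod (P i k))\<^sup>2)"
    by (simp only: of_real_sum complex_norm_square)
  finally show ?thesis .
qed

lemma idempotent_hermitian_trace_zero:
  fixes P :: "nat \<Rightarrow> nat \<Rightarrow> complex"
  assumes herm: "\<And>i k. i < n \<Longrightarrow> k < n \<Longrightarrow> cnj (P i k) = P k i"
    and idem: "\<And>i l. i < n \<Longrightarrow> l < n \<Longrightarrow> (\<Sum>k<n. P i k * P k l) = P i l"
    and tr: "(\<Sum>i<n. P i i) = 0" and ik: "i < n" "k < n"
  shows "P i k = 0"
proof -
  have "(\<Sum>i<n. P i i) = (\<Sum>i<n. of_real (\<Sum>k<n. (cmod (P i k))\<^sup>2))"
    using idempotent_hermitian_diag[OF herm idem] by (intro sum.cong) auto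
  then have "of_real (\<Sum>i<n. \<Sum>k<n. (cmod (P i k))\<^sup>2) = (0 :: complex)"
    using tr by (simp only: of_real_sum)
  then have "(\<Sum>i<n. \<Sum>k<n. (cmod (P i k))\<^sup>2) = 0" by (simp only: of_real_eq_0_iff)
  then have "(\<Sum>k<n. (cmod (P i k))\<^sup>2) = 0"
    using ik by (subst (asm) sum_nonneg_eq_0_iff) (auto intro: sum_nonneg)
  then show ?thesis using ik by (subst (asm) sum_nonneg_eq_0_iff) auto
qed

lemma idempotent_entries:
  assumes "P \<in> carrier_mat n n" "P * P = P" "i < n" "l < n"
  shows "(\<Sum>k<n. P $$ (i,k) * P $$ (k,l)) = P $$ (i,l)"
  using arg_cong[OF assms(2), of "\<lambda>A. A $$ (i,l)"] assms(1,3,4) by (simp add: scalar_prod_def lessThan_atLeast0)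

lemma projection_rank_one_entries:
  assumes herm: "hermitian n P" and idem: "P * P = P" and tr: "mtrace P = 1"
  obtains j p where "j < n" "p > 0" "P $$ (j,j) = of_real p"
    "\<And>i k. i < n \<Longrightarrow> k < n \<Longrightarrow> P $$ (i,k) = P $$ (i,j) * P $$ (j,k) / of_real p"
proof -
  have P: "P \<in> carrier_mat n n" using herm by (simp add: hermitian_def)
  note cnjP = hermitian_cnj[OF herm] and idemP = idempotent_entries[OF P idem]
  define d where "d j = (\<Sum>k<n. (cmod (P $$ (j,k)))\<^sup>2)" for j
  have diag: "P $$ (j,j) = of_real (d j)" if "j < n" for j
    unfolding d_def by (rule idempotent_hermitian_diag[OF cnjP idemP that])
  have "of_real (\<Sum>j<n. d j) = (1 :: complex)"
    using tr P diag by (simp add: mtrace_def of_real_sum)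
  then have "(\<Sum>j<n. d j) \<noteq> 0" by (simp only: of_real_eq_1_iff)
  then obtain j where j: "j < n" "d j \<noteq> 0" by (meson sum.neutral lessThan_iff)
  define p where "p = d j"
  have p: "p > 0" using j by (simp add: p_def d_def order.not_eq_order_implies_strict sum_nonneg)
  have Pjj: "P $$ (j,j) = of_real p" using diag[OF j(1)] by (simp add: p_def)
  define c where "c = inverse (of_real p :: complex)"
  have cp: "c * of_real p = 1" using p by (simp add: c_def)
  \<comment> \<open>\<open>Q\<close> is again a Hermitian projection, of trace \<open>0\<close>, hence zero.\<close>
  define Q where "Q i k = P $$ (i,k) - c * (P $$ (i,j) * P $$ (j,k))" for i k
  have cnjQ: "cnj (Q i k) = Q k i" if "i < n" "k < n" for i k
    using that j(1) by (simp add: Q_def c_def cnjP mult.commute)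
  have idemQ: "(\<Sum>k<n. Q i k * Q k l) = Q i l" if il: "i < n" "l < n" for i l
  proof -
    have expand: "Q i k * Q k l = P $$ (i,k) * P $$ (k,l) - (c * P $$ (j,l)) * (P $$ (i,k) * P $$ (k,j))
        - (c * P $$ (i,j)) * (P $$ (j,k) * P $$ (k,l))
        + (c * c * P $$ (i,j) * P $$ (j,l)) * (P $$ (j,k) * P $$ (k,j))" for k
      by (simp add: Q_def algebra_simps)
    have "(\<Sum>k<n. Q i k * Q k l) = (\<Sum>k<n. P $$ (i,k) * P $$ (k,l))
        - (c * P $$ (j,l)) * (\<Sum>k<n. P $$ (i,k) * P $$ (k,j))
        - (c * P $$ (i,j)) * (\<Sum>k<n. P $$ (j,k) * P $$ (k,l))
        + (c * c * P $$ (i,j) * P $$ (j,l)) * (\<Sum>k<n. P $$ (j,k) * P $$ (k,j))"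
      by (simp only: expand sum.distrib sum_subtractf sum_distrib_left)
    also have "\<dots> = Q i l"
      using p by (simp only: idemP[OF il] idemP[OF il(1) j(1)] idemP[OF j(1) il(2)] idemP[OF j(1) j(1)] Pjj)
        (simp add: Q_def c_def field_simps)
    finally show ?thesis .
  qed
  have "(\<Sum>i<n. Q i i) = (\<Sum>i<n. P $$ (i,i)) - c * (\<Sum>i<n. P $$ (j,i) * P $$ (i,j))"
    by (simp add: Q_def sum_subtractf sum_distrib_left mult.commute)
  also have "\<dots> = 0"
    using tr cp j(1) P by (simp add: idemP Pjj mtrace_def)
  finally have "Q i k = 0" if "i < n" "k < n" for i k
    using idempotent_hermitian_trace_zero[OF cnjQ idemQ _ that] by blast
  then show thesis
    using that[OF j(1) p Pjj] by (simp add: Q_def c_def field_simps)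
qed

lemma pure_state_of_projection:
  assumes herm: "hermitian n P" and idem: "P * P = P" and tr: "mtrace P = 1"
  shows "pure_state n P"
proof -
  have P: "P \<in> carrier_mat n n" using herm by (simp add: hermitian_def)
  note cnjP = hermitian_cnj[OF herm]
  obtain j p where j: "j < n" and p: "p > 0" and Pjj: "P $$ (j,j) = of_real p"
    and rank1: "\<And>i k. i < n \<Longrightarrow> k < n \<Longrightarrow> P $$ (i,k) = P $$ (i,j) * P $$ (j,k) / of_real p"
    using projection_rank_one_entries[OF assms] by blast
  define u where "u = vec n (\<lambda>i. P $$ (i,j) / of_real (sqrt p))"
  show ?thesis unfolding pure_state_def
  proof (intro bexI conjI)
    have "(cmod (u $ i))\<^sup>2 = (cmod (P $$ (j,i)))\<^sup>2 / p" if "i < n" for i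
      using that j p cnjP[of j i, symmetric] by (simp add: u_def norm_divide power_divide)
    then have "(\<Sum>i<n. (cmod (u $ i))\<^sup>2) = (\<Sum>i<n. (cmod (P $$ (j,i)))\<^sup>2) / p"
      by (simp add: sum_divide_distrib)
    also have "(\<Sum>i<n. (cmod (P $$ (j,i)))\<^sup>2) = p"
    proof -
      have "of_real (\<Sum>i<n. (cmod (P $$ (j,i)))\<^sup>2) = P $$ (j,j)"
        by (rule idempotent_hermitian_diag[OF cnjP idempotent_entries[OF P idem] j, symmetric])
      then show ?thesis unfolding Pjj by (simp only: of_real_eq_iff)
    qed
    finally show "(\<Sum>i<n. (cmod (u $ i))\<^sup>2) = 1" using p by simp
    show "P = mat n n (\<lambda>(i,k). u $ i * cnj (u $ k))"
    proof (rule eq_matI)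
      fix i k assume "i < dim_row (mat n n (\<lambda>(i,k). u $ i * cnj (u $ k)))"
        "k < dim_col (mat n n (\<lambda>(i,k). u $ i * cnj (u $ k)))"
      then have ik: "i < n" "k < n" by auto
      have "of_real (sqrt p) * of_real (sqrt p) = (of_real p :: complex)"
        using p by (simp flip: of_real_mult)
      then have "u $ i * cnj (u $ k) = P $$ (i,j) * P $$ (j,k) / of_real p"
        using ik j by (simp add: u_def cnjP field_simps)
      then show "P $$ (i,k) = mat n n (\<lambda>(i,k). u $ i * cnj (u $ k)) $$ (i,k)"
        using ik rank1[OF ik] by simp
    qed (use P in auto)
  qed (simp add: u_def)
qed

lemma smult_smult_mat: "k \<cdot>\<^sub>m (l \<cdot>\<^sub>m A) = (k * l) \<cdot>\<^sub>m (A :: 'a::comm_ring_1 mat)"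
  by (rule eq_matI) auto

lemma idempotent_of_cubic:
  fixes A :: "complex mat"
  assumes A: "A \<in> carrier_mat n n" and h: "A * A * A = s \<cdot>\<^sub>m A" and as: "a * a = s" and s0: "s \<noteq> 0"
  shows "((1/(2*s)) \<cdot>\<^sub>m (A * A + a \<cdot>\<^sub>m A)) * ((1/(2*s)) \<cdot>\<^sub>m (A * A + a \<cdot>\<^sub>m A))
       = (1/(2*s)) \<cdot>\<^sub>m (A * A + a \<cdot>\<^sub>m A)"
proof -
  define B where "B = A * A"
  define r where "r = 1/(2*s)"
  have Bc: "B \<in> carrier_mat n n" using A by (simp add: B_def)
  have aAc: "a \<cdot>\<^sub>m A \<in> carrier_mat n n" using A by simp
  have BA: "B * A = s \<cdot>\<^sub>m A" using h by (simp add: B_def)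
  have "A * B = A * A * A" unfolding B_def by (rule assoc_mult_mat[OF A A A, symmetric])
  then have AB: "A * B = s \<cdot>\<^sub>m A" using h by simp
  have BB: "B * B = s \<cdot>\<^sub>m B"
  proof -
    have "B * B = (B * A) * A" unfolding B_def using A by (simp add: assoc_mult_mat[of _ n n _ n _ n])
    also have "\<dots> = (s \<cdot>\<^sub>m A) * A" by (simp only: BA)
    also have "\<dots> = s \<cdot>\<^sub>m B" using A by (simp add: mult_smult_assoc_mat[of _ n n] B_def)
    finally show ?thesis .
  qed
  have Sc: "B + a \<cdot>\<^sub>m A \<in> carrier_mat n n" using Bc aAc by simp
  have sq: "(B + a \<cdot>\<^sub>m A) * (B + a \<cdot>\<^sub>m A) = (2*s) \<cdot>\<^sub>m (B + a \<cdot>\<^sub>m A)"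
  proof -
    have "(B + a \<cdot>\<^sub>m A) * (B + a \<cdot>\<^sub>m A) = B * B + (a \<cdot>\<^sub>m A) * B + (B * (a \<cdot>\<^sub>m A) + (a \<cdot>\<^sub>m A) * (a \<cdot>\<^sub>m A))"
      using Bc aAc Sc by (simp add: add_mult_distrib_mat[of _ n n _ _ n] mult_add_distrib_mat[of _ n n _ n])
    also have "\<dots> = s \<cdot>\<^sub>m B + (a * s) \<cdot>\<^sub>m A + ((a * s) \<cdot>\<^sub>m A + (a * a) \<cdot>\<^sub>m B)"
      using A Bc by (simp add: BB mult_smult_distrib[of _ n n] mult_smult_assoc_mat[of _ n n] AB BA smult_smult_mat B_def[symmetric] mult.commute)
    also have "\<dots> = (2*s) \<cdot>\<^sub>m (B + a \<cdot>\<^sub>m A)"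
      using A Bc unfolding as by (intro eq_matI) (auto simp: algebra_simps)
    finally show ?thesis .
  qed
  have "(r \<cdot>\<^sub>m (B + a \<cdot>\<^sub>m A)) * (r \<cdot>\<^sub>m (B + a \<cdot>\<^sub>m A)) = (r * r * (2*s)) \<cdot>\<^sub>m (B + a \<cdot>\<^sub>m A)"
    using Sc by (simp add: mult_smult_distrib[of _ n n] mult_smult_assoc_mat[of _ n n] sq smult_smult_mat mult_ac)
  also have "r * r * (2*s) = r" using s0 by (simp add: r_def field_simps)
  finally show ?thesis by (simp add: r_def B_def)
qed

section \<open>Traceless singular Hermitian 3 \<times> 3 matrices\<close>

lemma less_3_iff: "(i :: nat) < 3 \<longleftrightarrow> i = 0 \<or> i = 1 \<or> i = 2"
  by auto

lemma sum_lessThan_3: "(\<Sum>i<3. (f :: nat \<Rightarrow> _) i) = f 0 + f 1 + (f 2 :: 'a::comm_monoid_add)"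
  by (simp add: eval_nat_numeral)

lemma sum_atLeast0_lessThan_2: "(\<Sum>i = 0..<2. (f :: nat \<Rightarrow> _) i) = f 0 + (f 1 :: 'a::comm_monoid_add)"
  by (simp add: eval_nat_numeral)

lemma sum_atLeast0_lessThan_3: "(\<Sum>i = 0..<3. (f :: nat \<Rightarrow> _) i) = f 0 + f 1 + (f 2 :: 'a::comm_monoid_add)"
  by (simp add: eval_nat_numeral)

lemma mat3_eqI:
  assumes "A \<in> carrier_mat 3 3" "B \<in> carrier_mat 3 3"
    "A $$ (0,0) = B $$ (0,0)" "A $$ (0,1) = B $$ (0,1)" "A $$ (0,2) = B $$ (0,2)"
    "A $$ (1,0) = B $$ (1,0)" "A $$ (1,1) = B $$ (1,1)" "A $$ (1,2) = B $$ (1,2)"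
    "A $$ (2,0) = B $$ (2,0)" "A $$ (2,1) = B $$ (2,1)" "A $$ (2,2) = B $$ (2,2)"
  shows "A = B"
proof (rule eq_matI)
  fix i j assume "i < dim_row B" "j < dim_col B"
  then show "A $$ (i,j) = B $$ (i,j)" using assms(2-) by (auto simp: less_3_iff)
qed (use assms(1,2) in auto)

definition det3 :: "complex mat \<Rightarrow> complex" where
  "det3 X = X$$(0,0) * X$$(1,1) * X$$(2,2) + X$$(0,1) * X$$(1,2) * X$$(2,0) + X$$(0,2) * X$$(1,0) * X$$(2,1)
     - X$$(0,2) * X$$(1,1) * X$$(2,0) - X$$(0,1) * X$$(1,0) * X$$(2,2) - X$$(0,0) * X$$(1,2) * X$$(2,1)"

lemma det3_smult: "A \<in> carrier_mat 3 3 \<Longrightarrow> det3 (c \<cdot>\<^sub>m A) = c^3 * det3 A"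
  by (simp add: det3_def power3_eq_cube algebra_simps)

lemma cayley_hamilton_traceless3:
  assumes A: "A \<in> carrier_mat 3 3" and tr: "mtrace A = 0"
  shows "A * A * A = (mtrace (A * A) / 2) \<cdot>\<^sub>m A + det3 A \<cdot>\<^sub>m 1\<^sub>m 3"
proof -
  have t: "A$$(2,2) = - A$$(0,0) - A$$(1,1)"
    using tr A by (simp add: mtrace_def sum_lessThan_3 algebra_simps add_eq_0_iff)
  show ?thesis
    using A by (intro mat3_eqI) (auto simp: mtrace_def sum_lessThan_3 sum_atLeast0_lessThan_3
        scalar_prod_def det3_def t field_simps)
qed

lemma pure_state_pair_of_singular_traceless:
  assumes herm: "hermitian 3 X" and X0: "X \<noteq> 0\<^sub>m 3 3" and tr: "mtrace X = 0" and det: "det3 X = 0"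
  obtains \<rho>1 \<rho>2 c where "pure_state 3 \<rho>1" "pure_state 3 \<rho>2" "\<rho>1 \<noteq> \<rho>2" "\<rho>1 = \<rho>2 + c \<cdot>\<^sub>m X"
proof -
  have X: "X \<in> carrier_mat 3 3" using herm by (simp add: hermitian_def)
  have XX: "X * X \<in> carrier_mat 3 3" using X by auto
  define s where "s = Re (mtrace (X * X)) / 2"
  have s: "s > 0" using mtrace_mult_self_hermitian_pos[OF herm X0] by (simp add: s_def)
  have trXX: "mtrace (X * X) = of_real (2 * s)"
    using mtrace_mult_self_hermitian[OF herm] by (simp add: s_def)
  have cube: "X * X * X = of_real s \<cdot>\<^sub>m X"
    using cayley_hamilton_traceless3[OF X tr] X by (simp add: trXX det) (auto intro!: eq_matI)
  define a :: complex where "a = of_real (sqrt s)"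
  have aa: "a * a = of_real s" and "(- a) * (- a) = of_real s"
    using s by (simp_all add: a_def flip: of_real_mult)
  define P where "P b = (1 / (2 * of_real s)) \<cdot>\<^sub>m (X * X + b \<cdot>\<^sub>m X)" for b
  have s0: "(of_real s :: complex) \<noteq> 0" using s by simp
  have proj: "pure_state 3 (P b)" if "b * b = of_real s" "b \<in> \<real>" for b
  proof (rule pure_state_of_projection)
    show "hermitian 3 (P b)" unfolding P_def using herm that(2)
      by (intro hermitian_smult_real hermitian_add hermitian_mult_self) auto
    show "P b * P b = P b" unfolding P_def by (rule idempotent_of_cubic[OF X cube that(1) s0])
    have "mtrace (X * X + b \<cdot>\<^sub>m X) = 2 * of_real s"
      using X XX by (simp add: mtrace_add[OF XX] mtrace_smult[OF X] trXX tr)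
    then show "mtrace (P b) = 1" using X XX s0 by (simp add: P_def mtrace_smult[of _ 3])
  qed
  have diff: "P a = P (- a) + (a / of_real s) \<cdot>\<^sub>m X"
    using X XX s0 by (intro eq_matI) (auto simp: P_def field_simps)
  obtain i j where ij: "i < 3" "j < 3" "X $$ (i,j) \<noteq> 0"
    using nonzero_mat_entry[OF X X0] by blast
  have "P a $$ (i,j) = P (- a) $$ (i,j) + a / of_real s * X $$ (i,j)"
    using diff ij X XX by (simp add: P_def)
  moreover have "a / of_real s \<noteq> 0" using s by (simp add: a_def)
  ultimately have "P a \<noteq> P (- a)" using ij(3) by auto
  show thesis
    using that proj[of a] proj[of "- a"] aa \<open>(- a) * (- a) = of_real s\<close> \<open>P a \<noteq> P (- a)\<close> diff
    by (simp add: a_def)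
qed

section \<open>At least eight outcomes are needed\<close>

type_synonym herm3_coords = "real \<times> real \<times> real \<times> complex \<times> complex \<times> complex"

definition herm3_of :: "herm3_coords \<Rightarrow> complex mat" where
  "herm3_of = (\<lambda>(a0, a1, a2, z01, z02, z12). mat 3 3 (\<lambda>(i,j).
     [[of_real a0, z01, z02], [cnj z01, of_real a1, z12], [cnj z02, cnj z12, of_real a2]] ! i ! j))"

lemma herm3_of_carrier [simp]: "herm3_of x \<in> carrier_mat 3 3"
  by (cases x rule: prod_cases6) (simp add: herm3_of_def)

lemma hermitian_herm3_of: "hermitian 3 (herm3_of x)"
  by (cases x rule: prod_cases6) (auto simp: hermitian_iff herm3_of_def less_3_iff)

lemma herm3_of_add: "herm3_of (x + y) = herm3_of x + herm3_of y"
  by (cases x rule: prod_cases6, cases y rule: prod_cases6)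
    (auto simp: herm3_of_def intro!: mat3_eqI)

lemma herm3_of_scaleR: "herm3_of (r *\<^sub>R x) = of_real r \<cdot>\<^sub>m herm3_of x"
  by (cases x rule: prod_cases6) (auto simp: herm3_of_def scaleR_conv_of_real intro!: mat3_eqI)

lemma herm3_of_eq_0_iff: "herm3_of x = 0\<^sub>m 3 3 \<longleftrightarrow> x = 0"
proof
  assume h: "herm3_of x = 0\<^sub>m 3 3"
  obtain a0 a1 a2 z01 z02 z12 where x: "x = (a0, a1, a2, z01, z02, z12)" by (rule prod_cases6)
  have "herm3_of x $$ (i,j) = 0" if "i < 3" "j < 3" for i j using h that by simp
  from this[of 0 0] this[of 1 1] this[of 2 2] this[of 0 1] this[of 0 2] this[of 1 2]
  show "x = 0" by (simp add: x herm3_of_def zero_prod_def)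
qed (auto simp: herm3_of_def zero_prod_def less_3_iff intro!: eq_matI)

lemma det3_herm3_of_real: "det3 (herm3_of x) \<in> \<real>"
  by (cases x rule: prod_cases6) (simp add: det3_def herm3_of_def Reals_cnj_iff)

lemma continuous_on_det3_herm3_of:
  "continuous_on S f \<Longrightarrow> continuous_on S (\<lambda>t. det3 (herm3_of (f t)))"
  unfolding herm3_of_def det3_def by (simp add: case_prod_beta) (intro continuous_intros)

lemma linear_mtrace_herm3_of:
  assumes "C \<in> carrier_mat 3 3"
  shows "linear (\<lambda>x. Re (mtrace (herm3_of x * C)))"
  by (rule linearI)
    (simp_all add: herm3_of_add herm3_of_scaleR mtrace_add_mult[of _ 3] mtrace_smult_mult[of _ 3] assms)

lemma common_kernel_orthogonal_pair:
  fixes g :: "'i \<Rightarrow> 'a::euclidean_space \<Rightarrow> real"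
  assumes fin: "finite \<Omega>" and lin: "\<And>w. w \<in> \<Omega> \<Longrightarrow> linear (g w)" and dim: "card \<Omega> + 2 \<le> DIM('a)"
  obtains x1 x2 where "x1 \<noteq> 0" "x2 \<noteq> 0" "orthogonal x1 x2" "\<And>w. w \<in> \<Omega> \<Longrightarrow> g w x1 = 0 \<and> g w x2 = 0"
proof -
  define r where "r w = adjoint (g w) 1" for w
  have gr: "g w x = inner x (r w)" if "w \<in> \<Omega>" for w x
    using adjoint_works[OF lin[OF that], of x 1] by (simp add: r_def)
  define K where "K = {y. \<forall>x \<in> span (r ` \<Omega>). orthogonal x y}"
  have "dim {y \<in> UNIV. \<forall>x \<in> span (r ` \<Omega>). orthogonal x y} + dim (span (r ` \<Omega>)) = dim (UNIV :: 'a set)"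
    by (rule dim_subspace_orthogonal_to_vectors) (simp_all add: subspace_span)
  moreover have "dim (span (r ` \<Omega>)) \<le> card \<Omega>"
    using fin dim_le_card'[of "r ` \<Omega>"] card_image_le[of \<Omega> r] by simp
  ultimately have "2 \<le> dim K" using dim by (simp add: K_def)
  obtain B where B: "0 \<notin> B" "B \<subseteq> K" "pairwise orthogonal B" "independent B" "card B = dim K" "span B = K"
    unfolding K_def by (rule orthogonal_basis_subspace[OF subspace_orthogonal_to_vectors])
  have "finite B" using B(5) \<open>2 \<le> dim K\<close> by (intro card_ge_0_finite) simp
  moreover have "\<not> card B \<le> Suc 0" using B(5) \<open>2 \<le> dim K\<close> by simp
  ultimately obtain x1 x2 where x: "x1 \<in> B" "x2 \<in> B" "x1 \<noteq> x2"
    using card_le_Suc0_iff_eq by blast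
  show thesis
  proof
    show "x1 \<noteq> 0" "x2 \<noteq> 0" using B(1) x by auto
    show "orthogonal x1 x2" using B(3) x by (simp add: pairwise_def)
    fix w assume w: "w \<in> \<Omega>"
    then have "r w \<in> span (r ` \<Omega>)" by (simp add: span_base)
    then have "orthogonal (r w) x1" "orthogonal (r w) x2" using B(2) x by (auto simp: K_def)
    then show "g w x1 = 0 \<and> g w x2 = 0"
      unfolding gr[OF w] orthogonal_def by (simp add: inner_commute[of x1] inner_commute[of x2])
  qed
qed

lemma IVT_sign_change:
  fixes \<phi> :: "real \<Rightarrow> real"
  assumes "a \<le> b" "continuous_on {a..b} \<phi>" "\<phi> b = - \<phi> a"
  obtains t where "a \<le> t" "t \<le> b" "\<phi> t = 0"
proof (cases "\<phi> a \<le> 0")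
  case True
  then show thesis using IVT'[of \<phi> a 0 b] assms that by auto
next
  case False
  then show thesis using IVT2'[of \<phi> b 0 a] assms that by auto
qed

lemma orthogonal_circle_nonzero:
  fixes x1 x2 :: "'a::real_inner"
  assumes "x1 \<noteq> 0" "x2 \<noteq> 0" "orthogonal x1 x2"
  shows "cos t *\<^sub>R x1 + sin t *\<^sub>R x2 \<noteq> 0"
proof
  assume h: "cos t *\<^sub>R x1 + sin t *\<^sub>R x2 = 0"
  have "cos t * inner x1 x1 = inner (cos t *\<^sub>R x1 + sin t *\<^sub>R x2) x1"
    using assms(3) by (simp add: inner_add_left orthogonal_def inner_commute[of x2 x1])
  then have "cos t = 0" using h assms(1) by simp
  have "sin t * inner x2 x2 = inner (cos t *\<^sub>R x1 + sin t *\<^sub>R x2) x2"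
    using assms(3) by (simp add: inner_add_left orthogonal_def)
  then have "sin t = 0" using h assms(2) by simp
  then show False using \<open>cos t = 0\<close> sin_cos_squared_add[of t] by simp
qed

theorem PIC_card_ge_8:
  assumes obs: "observable 3 \<Omega> Mo" and pic: "PIC 3 \<Omega> Mo"
  shows "8 \<le> card \<Omega>"
proof (rule ccontr)
  assume "\<not> 8 \<le> card \<Omega>"
  then have small: "card \<Omega> + 2 \<le> DIM(herm3_coords)" by simp
  have fin: "finite \<Omega>" and pos: "\<And>w. w \<in> \<Omega> \<Longrightarrow> positive_op 3 (Mo w)"
    using obs by (auto simp: observable_def)
  have Mo: "Mo w \<in> carrier_mat 3 3" if "w \<in> \<Omega>" for w
    using pos[OF that] by (simp add: positive_op_def)
  define g where "g w x = Re (mtrace (herm3_of x * Mo w))" for w x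
  obtain x1 x2 where x12: "x1 \<noteq> 0" "x2 \<noteq> 0" "orthogonal x1 x2"
    and ker: "\<And>w. w \<in> \<Omega> \<Longrightarrow> g w x1 = 0 \<and> g w x2 = 0"
    using common_kernel_orthogonal_pair[OF fin _ small, of g] linear_mtrace_herm3_of[OF Mo]
    unfolding g_def by blast
  define \<phi> where "\<phi> t = Re (det3 (herm3_of (cos t *\<^sub>R x1 + sin t *\<^sub>R x2)))" for t
  have "continuous_on {0..pi} \<phi>"
    unfolding \<phi>_def by (intro continuous_intros continuous_on_det3_herm3_of)
  moreover have "\<phi> pi = - \<phi> 0"
    by (simp add: \<phi>_def herm3_of_scaleR[of "-1", simplified] det3_smult)
  ultimately obtain t where "\<phi> t = 0" using IVT_sign_change[of 0 pi \<phi>] by auto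
  define y where "y = cos t *\<^sub>R x1 + sin t *\<^sub>R x2"
  have Y: "hermitian 3 (herm3_of y)" "herm3_of y \<noteq> 0\<^sub>m 3 3"
    using orthogonal_circle_nonzero[OF x12] by (simp_all add: y_def hermitian_herm3_of herm3_of_eq_0_iff)
  have det: "det3 (herm3_of y) = 0"
    using \<open>\<phi> t = 0\<close> det3_herm3_of_real[of y] by (simp add: \<phi>_def y_def complex_eq_iff Reals_cnj_iff)
  have trw: "mtrace (herm3_of y * Mo w) = 0" if w: "w \<in> \<Omega>" for w
  proof -
    have "linear (g w)" unfolding g_def by (rule linear_mtrace_herm3_of[OF Mo[OF w]])
    then have "g w y = 0"
      using ker[OF w] by (simp add: y_def linear_add linear_scale)
    then have "Re (mtrace (herm3_of y * Mo w)) = 0" by (simp add: g_def)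
    moreover have "mtrace (herm3_of y * Mo w) \<in> \<real>"
      using mtrace_mult_hermitian_real[OF Y(1) positive_op_hermitian[OF pos[OF w]]] .
    ultimately show ?thesis by (simp add: complex_eq_iff Reals_cnj_iff)
  qed
  have "mtrace (herm3_of y) = 0"
    using sum_mtrace_observable[OF obs herm3_of_carrier, of y] trw by simp
  then obtain \<rho>1 \<rho>2 c where \<rho>: "pure_state 3 \<rho>1" "pure_state 3 \<rho>2" "\<rho>1 \<noteq> \<rho>2"
    "\<rho>1 = \<rho>2 + c \<cdot>\<^sub>m herm3_of y"
    using pure_state_pair_of_singular_traceless[OF Y _ det] by blast
  have "\<rho>2 \<in> carrier_mat 3 3" using \<rho>(2) by (auto simp: pure_state_def)
  then have "mtrace (\<rho>1 * Mo w) = mtrace (\<rho>2 * Mo w)" if "w \<in> \<Omega>" for w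
    using trw[OF that] Mo[OF that]
    by (simp add: \<rho>(4) mtrace_add_mult[of _ 3] mtrace_smult_mult[of _ 3])
  then show False using pic \<rho>(1-3) unfolding PIC_def by blast
qed

section \<open>Pure states are determined by their traces against \<open>T\<^sup>\<bottom>\<close>\<close>

lemma pure_stateE:
  assumes "pure_state 3 \<rho>"
  obtains v where "cmod (v$0)^2 + cmod (v$1)^2 + cmod (v$2)^2 = 1"
    "\<rho> = mat 3 3 (\<lambda>(i,j). v $ i * cnj (v $ j))"
  using assms unfolding pure_state_def by (auto simp: sum_lessThan_3)

lemma nonneg_eq_of_diff_eq_mult_eq:
  fixes x1 x2 y1 y2 :: real
  assumes "0 \<le> x1" "0 \<le> x2" "0 \<le> y1" "0 \<le> y2" "x1 - x2 = y1 - y2" "x1 * x2 = y1 * y2"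
  shows "x1 = y1"
proof (rule ccontr)
  assume "x1 \<noteq> y1"
  then consider "y1 < x1" "y2 < x2" | "x1 < y1" "x2 < y2" using assms(5) by linarith
  then show False
  proof cases
    case 1
    then have "y1 * y2 < x1 * x2" using assms(3,4) by (intro mult_strict_mono) auto
    then show False using assms(6) by simp
  next
    case 2
    then have "x1 * x2 < y1 * y2" using assms(1,2) by (intro mult_strict_mono) auto
    then show False using assms(6) by simp
  qed
qed

text \<open>
  The moduli \<open>|v\<^sub>k|\<^sup>2\<close> of a unit vector are fixed by their sum, by \<open>|v\<^sub>1|\<^sup>2 - |v\<^sub>2|\<^sup>2\<close> and by
  \<open>|v\<^sub>1 v\<^sub>2|\<close>; the off-diagonal entries then fix the phases.
\<close>

lemma pure_state_eqI:
  assumes "pure_state 3 \<rho>1" "pure_state 3 \<rho>2"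
    and off: "\<And>i j. i < 3 \<Longrightarrow> j < 3 \<Longrightarrow> i \<noteq> j \<Longrightarrow> \<rho>1 $$ (i,j) = \<rho>2 $$ (i,j)"
    and diff: "\<rho>1 $$ (1,1) - \<rho>1 $$ (2,2) = \<rho>2 $$ (1,1) - \<rho>2 $$ (2,2)"
  shows "\<rho>1 = \<rho>2"
proof -
  obtain v where v: "cmod (v$0)^2 + cmod (v$1)^2 + cmod (v$2)^2 = 1"
    and \<rho>1: "\<rho>1 = mat 3 3 (\<lambda>(i,j). v $ i * cnj (v $ j))" using assms(1) by (rule pure_stateE)
  obtain w where w: "cmod (w$0)^2 + cmod (w$1)^2 + cmod (w$2)^2 = 1"
    and \<rho>2: "\<rho>2 = mat 3 3 (\<lambda>(i,j). w $ i * cnj (w $ j))" using assms(2) by (rule pure_stateE)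
  have "of_real (cmod (v$1)^2 - cmod (v$2)^2) = (of_real (cmod (w$1)^2 - cmod (w$2)^2) :: complex)"
    using diff by (simp add: \<rho>1 \<rho>2 complex_norm_square[symmetric])
  then have d: "cmod (v$1)^2 - cmod (v$2)^2 = cmod (w$1)^2 - cmod (w$2)^2"
    by (simp only: of_real_eq_iff)
  have "v$1 * cnj (v$2) = w$1 * cnj (w$2)" using off[of 1 2] by (simp add: \<rho>1 \<rho>2)
  then have "cmod (v$1) * cmod (v$2) = cmod (w$1) * cmod (w$2)"
    by (metis complex_mod_cnj norm_mult)
  then have "cmod (v$1)^2 * cmod (v$2)^2 = cmod (w$1)^2 * cmod (w$2)^2"
    by (simp add: power_mult_distrib[symmetric])
  with d have m1: "cmod (v$1)^2 = cmod (w$1)^2"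
    by (rule nonneg_eq_of_diff_eq_mult_eq[rotated 4]) simp_all
  then have m2: "cmod (v$2)^2 = cmod (w$2)^2" using d by simp
  have m0: "cmod (v$0)^2 = cmod (w$0)^2" using m1 m2 v w by linarith
  show ?thesis
  proof (rule eq_matI)
    fix i j assume "i < dim_row \<rho>2" "j < dim_col \<rho>2"
    then have ij: "i < 3" "j < 3" by (auto simp: \<rho>2)
    show "\<rho>1 $$ (i,j) = \<rho>2 $$ (i,j)"
    proof (cases "i = j")
      case True
      have "v $ i * cnj (v $ i) = w $ i * cnj (w $ i)"
        using ij m0 m1 m2 unfolding less_3_iff by (auto simp flip: complex_norm_square)
      then show ?thesis using True ij by (simp add: \<rho>1 \<rho>2)
    qed (use off ij in auto)
  qed (auto simp: \<rho>1 \<rho>2)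
qed

lemma mtrace_Tmat:
  "L \<in> carrier_mat 3 3 \<Longrightarrow> mtrace (Tmat lam * L) = of_real lam * (2 * L $$ (0,0) - L $$ (1,1) - L $$ (2,2))"
  by (simp add: mtrace_def Tmat_def sum_lessThan_3 scalar_prod_def sum_atLeast0_lessThan_3 algebra_simps)

lemma pure_state_eq_of_Tmat_perp:
  assumes \<rho>: "pure_state 3 \<rho>1" "pure_state 3 \<rho>2"
    and eq: "\<And>L. L \<in> carrier_mat 3 3 \<Longrightarrow> mtrace (Tmat lam * L) = 0 \<Longrightarrow> mtrace (\<rho>1 * L) = mtrace (\<rho>2 * L)"
  shows "\<rho>1 = \<rho>2"
proof (rule pure_state_eqI[OF \<rho>])
  have c: "\<rho>1 \<in> carrier_mat 3 3" "\<rho>2 \<in> carrier_mat 3 3" using \<rho> by (auto simp: pure_state_def)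
  show "\<rho>1 $$ (i,j) = \<rho>2 $$ (i,j)" if "i < 3" "j < 3" "i \<noteq> j" for i j
  proof -
    have "mtrace (Tmat lam * matrix_unit 3 j i) = 0"
      using that by (simp add: mtrace_Tmat matrix_unit_def)
    then have "mtrace (\<rho>1 * matrix_unit 3 j i) = mtrace (\<rho>2 * matrix_unit 3 j i)"
      by (rule eq[OF matrix_unit_carrier])
    then show ?thesis
      using that by (simp add: mtrace_mult_matrix_unit[OF c(1)] mtrace_mult_matrix_unit[OF c(2)])
  qed
  define D where "D = matrix_unit 3 1 1 - matrix_unit 3 2 2"
  have D: "D \<in> carrier_mat 3 3" unfolding D_def by (rule minus_carrier_mat) simp
  have "mtrace (Tmat lam * D) = 0" using D by (simp add: mtrace_Tmat D_def matrix_unit_def)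
  then have "mtrace (\<rho>1 * D) = mtrace (\<rho>2 * D)" by (rule eq[OF D])
  then show "\<rho>1 $$ (1,1) - \<rho>1 $$ (2,2) = \<rho>2 $$ (1,1) - \<rho>2 $$ (2,2)"
    using c D by (simp add: mtrace_mult sum_lessThan_3 D_def matrix_unit_def)
qed

lemma PIC_of_Tmat_perp_span:
  assumes span: "\<And>L. L \<in> carrier_mat 3 3 \<Longrightarrow> mtrace (Tmat lam * L) = 0 \<Longrightarrow>
      \<exists>c. L = mat 3 3 (\<lambda>(i,j). \<Sum>g\<in>S. c g * Ob g $$ (i,j))"
    and Ob: "\<And>g. g \<in> S \<Longrightarrow> Ob g \<in> carrier_mat 3 3"
  shows "PIC 3 S Ob"
  unfolding PIC_def
proof (intro allI impI)
  fix \<rho>1 \<rho>2 assume \<rho>: "pure_state 3 \<rho>1 \<and> pure_state 3 \<rho>2 \<and> \<rho>1 \<noteq> \<rho>2"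
  have c: "\<rho>1 \<in> carrier_mat 3 3" "\<rho>2 \<in> carrier_mat 3 3" using \<rho> by (auto simp: pure_state_def)
  show "\<exists>x\<in>S. mtrace (\<rho>1 * Ob x) \<noteq> mtrace (\<rho>2 * Ob x)"
  proof (rule ccontr)
    assume "\<not> ?thesis"
    then have tr: "mtrace (\<rho>1 * Ob g) = mtrace (\<rho>2 * Ob g)" if "g \<in> S" for g
      using that by blast
    have "mtrace (\<rho>1 * L) = mtrace (\<rho>2 * L)"
      if perp: "L \<in> carrier_mat 3 3" "mtrace (Tmat lam * L) = 0" for L
    proof -
      obtain c where L: "L = mat 3 3 (\<lambda>(i,j). \<Sum>g\<in>S. c g * Ob g $$ (i,j))"
        using span[OF perp] by blast
      have "mtrace (\<rho>1 * L) = (\<Sum>g\<in>S. c g * mtrace (\<rho>1 * Ob g))"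
        unfolding L by (rule mtrace_mult_lincomb[OF c(1) Ob])
      moreover have "mtrace (\<rho>2 * L) = (\<Sum>g\<in>S. c g * mtrace (\<rho>2 * Ob g))"
        unfolding L by (rule mtrace_mult_lincomb[OF c(2) Ob])
      ultimately show ?thesis using tr by simp
    qed
    then have "\<rho>1 = \<rho>2" using pure_state_eq_of_Tmat_perp \<rho> by blast
    then show False using \<rho> by simp
  qed
qed

section \<open>The quaternion-covariant observable\<close>

definition quaternions :: "complex mat list" where
  "quaternions = [1 \<cdot>\<^sub>m 1\<^sub>m 2, (-1) \<cdot>\<^sub>m 1\<^sub>m 2, 1 \<cdot>\<^sub>m (\<i> \<cdot>\<^sub>m sigma1), (-1) \<cdot>\<^sub>m (\<i> \<cdot>\<^sub>m sigma1),
     1 \<cdot>\<^sub>m (\<i> \<cdot>\<^sub>m sigma2), (-1) \<cdot>\<^sub>m (\<i> \<cdot>\<^sub>m sigma2), 1 \<cdot>\<^sub>m (\<i> \<cdot>\<^sub>m sigma3), (-1) \<cdot>\<^sub>m (\<i> \<cdot>\<^sub>m sigma3)]"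

lemma quaternion_group_eq: "quaternion_group = set quaternions"
  unfolding quaternion_group_def quaternions_def by auto

lemma distinct_quaternions: "distinct quaternions"
proof -
  have "distinct (map (\<lambda>A. (A $$ (0,0), A $$ (0,1))) quaternions)"
    by (simp add: quaternions_def sigma1_def sigma2_def sigma3_def mat_of_rows_list_def complex_eq_iff)
  then show ?thesis by (simp add: distinct_map)
qed

lemma card_quaternion_group: "card quaternion_group = 8"
  using distinct_quaternions by (simp add: quaternion_group_eq distinct_card quaternions_def)

lemma quaternion_carrier: "g \<in> quaternion_group \<Longrightarrow> g \<in> carrier_mat 2 2"
  by (auto simp: quaternion_group_eq quaternions_def sigma1_def sigma2_def sigma3_def mat_of_rows_list_def)

lemma sum_quaternion_group:
  "(\<Sum>g\<in>quaternion_group. f g) = f (quaternions!0) + f (quaternions!1) + f (quaternions!2)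
     + f (quaternions!3) + f (quaternions!4) + f (quaternions!5) + f (quaternions!6) + f (quaternions!7)"
  using sum_list_distinct_conv_sum_set[OF distinct_quaternions, of f]
  by (simp add: quaternion_group_eq quaternions_def add.assoc)

lemma Urep_carrier [simp]: "Urep g \<in> carrier_mat 3 3"
  by (simp add: Urep_def)

lemma Mseed_carrier [simp]: "Mseed a1 a2 a3 v \<in> carrier_mat 3 3"
  by (simp add: Mseed_def blk0_def offdiag_def)

lemma Urep_conj_carrier [simp]: "M \<in> carrier_mat 3 3 \<Longrightarrow> Urep g * M * adj (Urep g) \<in> carrier_mat 3 3"
  by (metis Urep_carrier carrier_adj mult_carrier_mat)

lemma Urep_mult:
  assumes "g \<in> carrier_mat 2 2" "x \<in> carrier_mat 2 2"
  shows "Urep g * Urep x = Urep (g * x)"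
  using assms by (intro mat3_eqI[OF mult_carrier_mat[OF Urep_carrier Urep_carrier] Urep_carrier])
    (simp_all add: Urep_def scalar_prod_def sum_atLeast0_lessThan_3 sum_atLeast0_lessThan_2)

lemma Urep_conj_mult:
  assumes "g \<in> carrier_mat 2 2" "x \<in> carrier_mat 2 2" "M \<in> carrier_mat 3 3"
  shows "Urep g * (Urep x * M * adj (Urep x)) * adj (Urep g) = Urep (g * x) * M * adj (Urep (g * x))"
proof -
  have [simp]: "adj (Urep g) \<in> carrier_mat 3 3" "adj (Urep x) \<in> carrier_mat 3 3" by simp_all
  have "Urep g * (Urep x * M * adj (Urep x)) * adj (Urep g) = (Urep g * Urep x) * M * (adj (Urep x) * adj (Urep g))"
    using assms(3) by (simp add: assoc_mult_mat[of _ 3 3 _ 3 _ 3] mult_carrier_mat[of _ 3 3 _ 3])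
  also have "\<dots> = Urep (g * x) * M * adj (Urep (g * x))"
    by (simp add: Urep_mult[OF assms(1,2)] adj_mult[of _ 3 3 _ 3, symmetric])
  finally show ?thesis .
qed

definition orbit_mat :: "complex \<Rightarrow> complex \<Rightarrow> real \<Rightarrow> real \<Rightarrow> real \<Rightarrow> complex mat" where
  "orbit_mat p0 p1 b1 b2 b3 = mat 3 3 (\<lambda>(i,j).
     [[1/8, cnj p0, cnj p1], [p0, 1/8 + b3, b1 - \<i> * b2], [p1, b1 + \<i> * b2, 1/8 - b3]] ! i ! j)"

lemma orbit_mat_carrier [simp]: "orbit_mat p0 p1 b1 b2 b3 \<in> carrier_mat 3 3"
  by (simp add: orbit_mat_def)

lemma Mseed_eq_orbit_mat: "Mseed a1 a2 a3 v = orbit_mat (v$0) (v$1) a1 a2 a3"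
  by (rule mat3_eqI) (simp_all add: Mseed_def orbit_mat_def blk0_def offdiag_def
      sigma1_def sigma2_def sigma3_def mat_of_rows_list_def)

lemma Mseed_conj_quaternions:
  "Urep (quaternions!0) * Mseed a1 a2 a3 v * adj (Urep (quaternions!0)) = orbit_mat (v$0) (v$1) a1 a2 a3"
  "Urep (quaternions!1) * Mseed a1 a2 a3 v * adj (Urep (quaternions!1)) = orbit_mat (-v$0) (-v$1) a1 a2 a3"
  "Urep (quaternions!2) * Mseed a1 a2 a3 v * adj (Urep (quaternions!2)) = orbit_mat (\<i>*v$1) (\<i>*v$0) a1 (-a2) (-a3)"
  "Urep (quaternions!3) * Mseed a1 a2 a3 v * adj (Urep (quaternions!3)) = orbit_mat (-\<i>*v$1) (-\<i>*v$0) a1 (-a2) (-a3)"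
  "Urep (quaternions!4) * Mseed a1 a2 a3 v * adj (Urep (quaternions!4)) = orbit_mat (v$1) (-v$0) (-a1) a2 (-a3)"
  "Urep (quaternions!5) * Mseed a1 a2 a3 v * adj (Urep (quaternions!5)) = orbit_mat (-v$1) (v$0) (-a1) a2 (-a3)"
  "Urep (quaternions!6) * Mseed a1 a2 a3 v * adj (Urep (quaternions!6)) = orbit_mat (\<i>*v$0) (-\<i>*v$1) (-a1) (-a2) a3"
  "Urep (quaternions!7) * Mseed a1 a2 a3 v * adj (Urep (quaternions!7)) = orbit_mat (-\<i>*v$0) (\<i>*v$1) (-a1) (-a2) a3"
  by (rule mat3_eqI[OF Urep_conj_carrier[OF Mseed_carrier] orbit_mat_carrier];
      simp add: Mseed_eq_orbit_mat quaternions_def orbit_mat_def Urep_def adj_def sigma1_def sigma2_def sigma3_def mat_of_rows_list_def scalar_prod_def sum_atLeast0_lessThan_3 algebra_simps)+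

lemma sum_Mseed_conj:
  "mat 3 3 (\<lambda>(i,j). \<Sum>g\<in>quaternion_group. (Urep g * Mseed a1 a2 a3 v * adj (Urep g)) $$ (i,j)) = 1\<^sub>m 3"
  unfolding sum_quaternion_group Mseed_conj_quaternions by (rule mat3_eqI) (simp_all add: orbit_mat_def)

lemma mtrace_Tmat_orbit_mat: "mtrace (Tmat lam * orbit_mat p0 p1 b1 b2 b3) = 0"
  by (simp add: mtrace_Tmat orbit_mat_def)

lemma mtrace_Tmat_Mseed_orbit_comb:
  "mtrace (Tmat lam * mat 3 3 (\<lambda>(i,j). \<Sum>g\<in>quaternion_group. c g * (Urep g * Mseed a1 a2 a3 v * adj (Urep g)) $$ (i,j))) = 0"
proof -
  have "mtrace (Tmat lam * mat 3 3 (\<lambda>(i,j). \<Sum>g\<in>quaternion_group. c g * (Urep g * Mseed a1 a2 a3 v * adj (Urep g)) $$ (i,j)))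
      = (\<Sum>g\<in>quaternion_group. c g * mtrace (Tmat lam * (Urep g * Mseed a1 a2 a3 v * adj (Urep g))))"
    by (rule mtrace_mult_lincomb) (simp_all add: Tmat_def)
  also have "\<dots> = 0"
    by (simp only: sum_quaternion_group Mseed_conj_quaternions mtrace_Tmat_orbit_mat) simp
  finally show ?thesis .
qed

text \<open>
  Coefficients expanding \<open>L \<in> T\<^sup>\<bottom>\<close> in the orbit: the effects of \<open>\<pm>g\<^sub>h\<close> get \<open>(d\<^sub>h \<pm> e\<^sub>h)/2\<close>, where \<open>d\<close>
  solves the block-diagonal part of \<open>L\<close> and \<open>e\<close> the off-diagonal one.
\<close>

definition diag_coeff :: "real \<Rightarrow> real \<Rightarrow> real \<Rightarrow> complex mat \<Rightarrow> nat \<Rightarrow> complex" where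
  "diag_coeff a1 a2 a3 L h =
     (let u1 = (L$$(1,2) + L$$(2,1)) / (2 * a1); u2 = (L$$(2,1) - L$$(1,2)) / (2 * \<i> * a2);
          u3 = (L$$(1,1) - L$$(2,2)) / (2 * a3)
      in 2 * L$$(0,0) + (if h = 0 then u1 + u2 + u3 else if h = 1 then u1 - u2 - u3
                         else if h = 2 then - u1 + u2 - u3 else - u1 - u2 + u3) / 4)"

definition offdiag_coeff :: "complex vec \<Rightarrow> complex mat \<Rightarrow> nat \<Rightarrow> complex" where
  "offdiag_coeff v L h =
     (let N = v$0 * cnj (v$0) + v$1 * cnj (v$1);
          p = (L$$(1,0) * cnj (v$0) + L$$(0,2) * v$1) / N; q = (L$$(1,0) * cnj (v$1) - L$$(0,2) * v$0) / N;
          p' = (L$$(0,1) * v$0 + L$$(2,0) * cnj (v$1)) / N; q' = (L$$(0,1) * v$1 - L$$(2,0) * cnj (v$0)) / N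
      in if h = 0 then (p + p') / 2 else if h = 1 then (q - q') / (2 * \<i>)
         else if h = 2 then (q + q') / 2 else (p - p') / (2 * \<i>))"

definition expansion_coeff :: "real \<Rightarrow> real \<Rightarrow> real \<Rightarrow> complex vec \<Rightarrow> complex mat \<Rightarrow> complex mat \<Rightarrow> complex" where
  "expansion_coeff a1 a2 a3 v L g =
     (let d = diag_coeff a1 a2 a3 L; e = offdiag_coeff v L in
      if g = quaternions!0 then (d 0 + e 0) / 2 else if g = quaternions!1 then (d 0 - e 0) / 2
      else if g = quaternions!2 then (d 1 + e 1) / 2 else if g = quaternions!3 then (d 1 - e 1) / 2
      else if g = quaternions!4 then (d 2 + e 2) / 2 else if g = quaternions!5 then (d 2 - e 2) / 2
      else if g = quaternions!6 then (d 3 + e 3) / 2 else (d 3 - e 3) / 2)"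

lemma expansion_coeff_quaternions:
  "expansion_coeff a1 a2 a3 v L (quaternions!0) = (diag_coeff a1 a2 a3 L 0 + offdiag_coeff v L 0) / 2"
  "expansion_coeff a1 a2 a3 v L (quaternions!1) = (diag_coeff a1 a2 a3 L 0 - offdiag_coeff v L 0) / 2"
  "expansion_coeff a1 a2 a3 v L (quaternions!2) = (diag_coeff a1 a2 a3 L 1 + offdiag_coeff v L 1) / 2"
  "expansion_coeff a1 a2 a3 v L (quaternions!3) = (diag_coeff a1 a2 a3 L 1 - offdiag_coeff v L 1) / 2"
  "expansion_coeff a1 a2 a3 v L (quaternions!4) = (diag_coeff a1 a2 a3 L 2 + offdiag_coeff v L 2) / 2"
  "expansion_coeff a1 a2 a3 v L (quaternions!5) = (diag_coeff a1 a2 a3 L 2 - offdiag_coeff v L 2) / 2"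
  "expansion_coeff a1 a2 a3 v L (quaternions!6) = (diag_coeff a1 a2 a3 L 3 + offdiag_coeff v L 3) / 2"
  "expansion_coeff a1 a2 a3 v L (quaternions!7) = (diag_coeff a1 a2 a3 L 3 - offdiag_coeff v L 3) / 2"
proof -
  have "quaternions ! i \<noteq> quaternions ! j" if "i < 8" "j < 8" "i \<noteq> j" for i j
    using distinct_quaternions that by (simp add: nth_eq_iff_index_eq quaternions_def)
  then show
  "expansion_coeff a1 a2 a3 v L (quaternions!0) = (diag_coeff a1 a2 a3 L 0 + offdiag_coeff v L 0) / 2"
  "expansion_coeff a1 a2 a3 v L (quaternions!1) = (diag_coeff a1 a2 a3 L 0 - offdiag_coeff v L 0) / 2"
  "expansion_coeff a1 a2 a3 v L (quaternions!2) = (diag_coeff a1 a2 a3 L 1 + offdiag_coeff v L 1) / 2"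
  "expansion_coeff a1 a2 a3 v L (quaternions!3) = (diag_coeff a1 a2 a3 L 1 - offdiag_coeff v L 1) / 2"
  "expansion_coeff a1 a2 a3 v L (quaternions!4) = (diag_coeff a1 a2 a3 L 2 + offdiag_coeff v L 2) / 2"
  "expansion_coeff a1 a2 a3 v L (quaternions!5) = (diag_coeff a1 a2 a3 L 2 - offdiag_coeff v L 2) / 2"
  "expansion_coeff a1 a2 a3 v L (quaternions!6) = (diag_coeff a1 a2 a3 L 3 + offdiag_coeff v L 3) / 2"
  "expansion_coeff a1 a2 a3 v L (quaternions!7) = (diag_coeff a1 a2 a3 L 3 - offdiag_coeff v L 3) / 2"
    unfolding expansion_coeff_def Let_def by simp_all
qed

lemma Mseed_orbit_expansion:
  assumes lam: "lam > 0" and a: "a1 \<noteq> 0" "a2 \<noteq> 0" "a3 \<noteq> 0"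
    and N: "v$0 * cnj (v$0) + v$1 * cnj (v$1) \<noteq> 0"
    and L: "L \<in> carrier_mat 3 3" and tr: "mtrace (Tmat lam * L) = 0"
  shows "L = mat 3 3 (\<lambda>(i,j). \<Sum>g\<in>quaternion_group.
               expansion_coeff a1 a2 a3 v L g * (Urep g * Mseed a1 a2 a3 v * adj (Urep g)) $$ (i,j))"
proof -
  have "2 * L$$(0,0) - L$$(1,1) - L$$(2,2) = 0" using tr lam by (simp add: mtrace_Tmat[OF L])
  then have L00: "L$$(0,0) = (L$$(Suc 0,Suc 0) + L$$(2,2)) / 2" by (simp add: field_simps)
  define d where "d = diag_coeff a1 a2 a3 L"
  define e where "e = offdiag_coeff v L"
  define N where "N = v$0 * cnj (v$0) + v$Suc 0 * cnj (v$Suc 0)"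
  define p where "p = (L$$(Suc 0,0) * cnj (v$0) + L$$(0,2) * v$Suc 0) / N"
  define q where "q = (L$$(Suc 0,0) * cnj (v$Suc 0) - L$$(0,2) * v$0) / N"
  define p' where "p' = (L$$(0,Suc 0) * v$0 + L$$(2,0) * cnj (v$Suc 0)) / N"
  define q' where "q' = (L$$(0,Suc 0) * v$Suc 0 - L$$(2,0) * cnj (v$0)) / N"
  have N0: "N \<noteq> 0" using N by (simp add: N_def)
  have E: "e 0 = (p + p') / 2" "e (Suc 0) = (q - q') / (2 * \<i>)" "e 2 = (q + q') / 2" "e 3 = (p - p') / (2 * \<i>)"
    unfolding e_def offdiag_coeff_def Let_def p_def q_def p'_def q'_def One_nat_def N_def[symmetric] by simp_all
  have O: "p * v$0 + q * v$Suc 0 = L$$(Suc 0,0)" "p' * v$Suc 0 - q' * v$0 = L$$(2,0)"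
      "p' * cnj (v$0) + q' * cnj (v$Suc 0) = L$$(0,Suc 0)" "p * cnj (v$Suc 0) - q * cnj (v$0) = L$$(0,2)"
    using N0 by (simp_all add: p_def q_def p'_def q'_def field_simps) (simp_all add: N_def algebra_simps)
  show ?thesis
    unfolding sum_quaternion_group Mseed_conj_quaternions expansion_coeff_quaternions d_def[symmetric] e_def[symmetric]
    by (rule mat3_eqI[OF L]; simp add: orbit_mat_def field_simps)
      (simp_all add: d_def diag_coeff_def Let_def L00 E, simp_all add: field_simps a O[symmetric])
qed

lemma vec2_sq_norm_nonzero:
  assumes "v \<in> carrier_vec 2" "v \<noteq> 0\<^sub>v 2"
  shows "v$0 * cnj (v$0) + v$1 * cnj (v$1) \<noteq> 0"
proof
  assume "v$0 * cnj (v$0) + v$1 * cnj (v$1) = 0"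
  then have "of_real ((cmod (v$0))\<^sup>2 + (cmod (v$1))\<^sup>2) = (0 :: complex)"
    by (simp only: of_real_add complex_norm_square)
  then have "v$0 = 0" "v$1 = 0" by (simp_all only: of_real_eq_0_iff) (auto simp: add_nonneg_eq_0_iff)
  then have "v = 0\<^sub>v 2" using assms(1) by (auto simp: less_2_cases_iff)
  then show False using assms(2) by simp
qed

theorem proposition6:
  fixes lam a1 a2 a3 :: real and v :: "complex vec"
  assumes "lam > 0"
    and "v \<in> carrier_vec 2" and "v \<noteq> 0\<^sub>v 2"
    and "a1 \<noteq> 0" and "a2 \<noteq> 0" and "a3 \<noteq> 0"
    and "positive_op 3 (Mseed a1 a2 a3 v)"
  defines "Obs \<equiv> (\<lambda>g. Urep g * Mseed a1 a2 a3 v * adj (Urep g))"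
  shows "observable 3 quaternion_group Obs
    \<and> (\<forall>g\<in>quaternion_group. \<forall>x\<in>quaternion_group.
          Urep g * Obs x * adj (Urep g) = Obs (g * x))
    \<and> {L. \<exists>c. L = mat 3 3 (\<lambda>(i,j). \<Sum>g\<in>quaternion_group. c g * Obs g $$ (i,j))}
        = {L \<in> carrier_mat 3 3. mtrace (Tmat lam * L) = 0}
    \<and> PIC 3 quaternion_group Obs
    \<and> card quaternion_group = 8
    \<and> (\<forall>(\<Omega> :: 'a set) Mo. observable 3 \<Omega> Mo \<and> PIC 3 \<Omega> Mo \<longrightarrow> 8 \<le> card \<Omega>)"
proof -
  have fin: "finite quaternion_group" by (simp add: quaternion_group_eq)
  have Obs: "Obs g \<in> carrier_mat 3 3" for g by (simp add: Obs_def)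
  have span: "\<exists>c. L = mat 3 3 (\<lambda>(i,j). \<Sum>g\<in>quaternion_group. c g * Obs g $$ (i,j))"
    if "L \<in> carrier_mat 3 3" "mtrace (Tmat lam * L) = 0" for L
    using Mseed_orbit_expansion[OF assms(1,4-6) vec2_sq_norm_nonzero[OF assms(2,3)] that]
    unfolding Obs_def by blast
  have "observable 3 quaternion_group Obs"
    unfolding observable_def Obs_def
    using fin positive_op_conj[OF assms(7) Urep_carrier] sum_Mseed_conj by blast
  moreover have "\<forall>g\<in>quaternion_group. \<forall>x\<in>quaternion_group. Urep g * Obs x * adj (Urep g) = Obs (g * x)"
    unfolding Obs_def by (simp add: Urep_conj_mult quaternion_carrier)
  moreover have "{L. \<exists>c. L = mat 3 3 (\<lambda>(i,j). \<Sum>g\<in>quaternion_group. c g * Obs g $$ (i,j))}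
      = {L \<in> carrier_mat 3 3. mtrace (Tmat lam * L) = 0}"
    using span mtrace_Tmat_Mseed_orbit_comb unfolding Obs_def by auto
  moreover have "PIC 3 quaternion_group Obs"
    by (rule PIC_of_Tmat_perp_span[OF span Obs])
  ultimately show ?thesis using card_quaternion_group PIC_card_ge_8 by blast
qed

end
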